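(* Let $d>1$ be an integer, let $q$ be a square power of an odd prime $p$ with $q \equiv 1 \pmod{2d}$, and let $\chi$ be a multiplicative character of $\mathbb{F}_q$ of order $d$. If the clique number of $GP(q,d)$ is $\sqrt{q}$, then the Gauss sum $G(\chi^j)$ is pure for every positive integer $j$.
   Context: $GP(q,d)$ is the graph on $\mathbb{F}_q$ in which distinct $x,y$ are adjacent iff $x-y$ is a $d$-th power in $\mathbb{F}_q^*$. For a multiplicative character $\chi$ (with $\chi(0)=0$ when $\chi$ is nontrivial, and the trivial character $\chi_0$ taking value $1$ on $\mathbb{F}_q^*$), $G(\chi)=\sum_{c\in\mathbb{F}_q}\chi(c)e_p(\operatorname{Tr}(c))$, where $\operatorname{Tr}$ is the absolute trace to $\mathbb{F}_p$ and $e_p(x)=e^{2\pi i x/p}$. A Gauss sum is pure if some nonzero integral power of it is a real number (in particular $G(\chi_0)=0$ counts as pure). *)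

theory Defs
  imports "HOL-Analysis.Analysis"
begin

definition gp_adj :: "nat \<Rightarrow> 'a::field \<Rightarrow> 'a \<Rightarrow> bool" where
  "gp_adj d x y \<longleftrightarrow> x \<noteq> y \<and> (\<exists>z. z \<noteq> 0 \<and> x - y = z ^ d)"

definition gp_clique :: "nat \<Rightarrow> 'a::field set \<Rightarrow> bool" where
  "gp_clique d S \<longleftrightarrow> (\<forall>x\<in>S. \<forall>y\<in>S. x \<noteq> y \<longrightarrow> gp_adj d x y)"

definition gp_clique_number :: "nat \<Rightarrow> 'a::{field,finite} itself \<Rightarrow> nat" where
  "gp_clique_number d _ = Max {card (S::'a set) | S. gp_clique d S}"

text \<open>Multiplicative character of a finite field, with the convention chi(0)=0 for nontrivial
  chi and chi_0(0)=1 for the trivial character.\<close>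
definition mult_char :: "('a::{field,finite} \<Rightarrow> complex) \<Rightarrow> bool" where
  "mult_char chi \<longleftrightarrow> (\<forall>x. x \<noteq> 0 \<longrightarrow> chi x \<noteq> 0) \<and>
     (\<forall>x y. x \<noteq> 0 \<longrightarrow> y \<noteq> 0 \<longrightarrow> chi (x * y) = chi x * chi y) \<and>
     chi 0 = (if (\<forall>x. x \<noteq> 0 \<longrightarrow> chi x = 1) then 1 else 0)"

definition char_order :: "('a::{field,finite} \<Rightarrow> complex) \<Rightarrow> nat" where
  "char_order chi = (LEAST k. k > 0 \<and> (\<forall>x. x \<noteq> 0 \<longrightarrow> chi x ^ k = 1))"

definition char_pow :: "('a::{field,finite} \<Rightarrow> complex) \<Rightarrow> nat \<Rightarrow> 'a \<Rightarrow> complex" where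
  "char_pow chi j c = (if c = 0 then (if (\<forall>x. x \<noteq> 0 \<longrightarrow> chi x ^ j = 1) then 1 else 0)
                      else chi c ^ j)"

definition abs_trace :: "nat \<Rightarrow> nat \<Rightarrow> 'a::field \<Rightarrow> 'a" where
  "abs_trace p n x = (\<Sum>i<n. x ^ (p ^ i))"

definition e_p :: "nat \<Rightarrow> 'a::field \<Rightarrow> complex" where
  "e_p p y = cis (2 * pi * real (THE k. k < p \<and> of_nat k = y) / real p)"

definition gauss_sum :: "nat \<Rightarrow> nat \<Rightarrow> ('a::{field,finite} \<Rightarrow> complex) \<Rightarrow> complex" where
  "gauss_sum p n chi = (\<Sum>c\<in>UNIV. chi c * e_p p (abs_trace p n c))"

definition pure :: "complex \<Rightarrow> bool" where
  "pure z \<longleftrightarrow> (\<exists>m::int. m \<noteq> 0 \<and> z powi m \<in> \<real>)"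

end

(* Let r = sqrt q, let A be a clique of size r and let X = chi^j; if X is trivial its Gauss sum
   vanishes, so assume it is not. Every difference of two distinct elements of A is a nonzero
   d-th power, hence X(a - b) = 1 there. With psi(x) = e_p(Tr x) put
   w(c) = |sum_{a in A} psi(c a)|^2. Orthogonality of psi gives
   sum_{c <> 0} w(c) = r^3 - r^2 and sum_{c <> 0} w(c) X(c) = (r^2 - r) G(X), and since
   |G(X)| = r both sums have the same absolute value. So the triangle inequality is an
   equality, which forces X(c) = G(X)/r for some c <> 0, and then G(X)^d = r^d is real. *)

theory Submission
  imports Defs "HOL-Computational_Algebra.Polynomial" "HOL-Computational_Algebra.Primes"
    "HOL-Number_Theory.Cong" "HOL-Library.Real_Mod"
begin

lemma CHAR_pos_finite_field [simp]: "CHAR('a::{field,finite}) > 0"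
  by (simp add: finite_imp_CHAR_pos)

lemma prime_CHAR_finite_field [simp]: "prime CHAR('a::{field,finite})"
  by (simp add: prime_CHAR_semidom)

lemma card_UNIV_field_ge_2: "CARD('a::{field,finite}) \<ge> 2"
proof -
  have "card {0::'a, 1} \<le> CARD('a)"
    by (rule card_mono) auto
  thus ?thesis by simp
qed

lemma field_power_card_minus_one:
  fixes x :: "'a::{field,finite}"
  assumes "x \<noteq> 0"
  shows "x ^ (CARD('a) - 1) = 1"
proof -
  let ?U = "UNIV - {0::'a}"
  have "\<Prod>?U = (\<Prod>y\<in>?U. x * y)"
    by (rule prod.reindex_bij_witness[where j="\<lambda>y. y / x" and i="\<lambda>y. x * y"])
      (use assms in auto)
  also have "\<dots> = x ^ (CARD('a) - 1) * \<Prod>?U"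
    by (simp add: prod.distrib card_Diff_singleton)
  finally show ?thesis
    by (metis mult_cancel_right1 prod_zero_iff finite Diff_iff singletonI)
qed

lemma field_power_card:
  fixes x :: "'a::{field,finite}"
  shows "x ^ CARD('a) = x"
proof (cases "x = 0")
  case False
  have "x ^ CARD('a) = x * x ^ (CARD('a) - 1)"
    using card_UNIV_field_ge_2[where 'a='a] by (simp flip: power_Suc)
  thus ?thesis using field_power_card_minus_one[OF False] by simp
qed simp

lemma of_nat_below_CHAR_inj:
  assumes "a < CHAR('a::comm_ring_1)" "b < CHAR('a)" "(of_nat a :: 'a) = of_nat b"
  shows "a = b"
  using assms by (simp add: of_nat_eq_iff_cong_CHAR cong_def)

lemma of_nat_power_CHAR:
  assumes "prime CHAR('a::comm_semiring_1)"
  shows "(of_nat k :: 'a) ^ CHAR('a) = of_nat k"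
  using assms by (induction k) (simp_all add: freshmans_dream power_0_left prime_gt_0_nat)

text \<open>The prime field consists of the roots of \<open>X^p - X\<close>; counting roots shows that it
  contains all of them.\<close>
lemma power_CHAR_eq_self_imp_of_nat:
  fixes y :: "'a::field"
  assumes "prime CHAR('a)" "y ^ CHAR('a) = y"
  shows "\<exists>k<CHAR('a). of_nat k = y"
proof -
  let ?p = "CHAR('a)"
  define P :: "'a poly" where "P = monom 1 ?p - monom 1 1"
  have poly_P: "poly P z = z ^ ?p - z" for z by (simp add: P_def poly_monom)
  have p: "?p > 1" using assms(1) prime_gt_1_nat by blast
  hence "coeff P ?p = 1" by (simp add: P_def coeff_monom)
  hence "P \<noteq> 0" by auto
  moreover have "degree P \<le> ?p"
    unfolding P_def using p by (intro degree_diff_le) (auto simp: degree_monom_eq)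
  ultimately have roots: "finite {z. poly P z = 0}" "card {z. poly P z = 0} \<le> ?p"
    using poly_roots_finite card_poly_roots_bound[of P] by fastforce+
  let ?F = "(of_nat :: nat \<Rightarrow> 'a) ` {..<?p}"
  have "card ?F = ?p"
    by (subst card_image) (auto simp: inj_on_def intro: of_nat_below_CHAR_inj)
  moreover have "?F \<subseteq> {z. poly P z = 0}"
    using of_nat_power_CHAR[OF assms(1)] by (auto simp: poly_P)
  ultimately have "?F = {z. poly P z = 0}"
    using roots by (metis card_subset_eq card_mono antisym)
  moreover have "y \<in> {z. poly P z = 0}" using assms(2) by (simp add: poly_P)
  ultimately show ?thesis by (metis image_iff lessThan_iff)
qed

lemma abs_trace_add:
  fixes x y :: "'a::field"
  assumes "prime CHAR('a)"
  shows "abs_trace CHAR('a) n (x + y) = abs_trace CHAR('a) n x + abs_trace CHAR('a) n y"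
  by (simp add: abs_trace_def freshmans_dream'[OF assms] sum.distrib)

lemma abs_trace_power_CHAR:
  fixes x :: "'a::{field,finite}"
  assumes "CARD('a) = CHAR('a) ^ n"
  shows "abs_trace CHAR('a) n x ^ CHAR('a) = abs_trace CHAR('a) n x"
proof -
  let ?p = "CHAR('a)"
  let ?f = "\<lambda>i. x ^ (?p ^ i)"
  have "abs_trace ?p n x ^ ?p = (\<Sum>i<n. ?f (Suc i))"
    unfolding abs_trace_def
    by (simp add: freshmans_dream_sum power_mult[symmetric] mult.commute)
  also have "\<dots> = (\<Sum>i<Suc n. ?f i) - ?f 0"
    by (simp only: sum.lessThan_Suc_shift add_diff_cancel_left')
  also have "\<dots> = abs_trace ?p n x"
    by (simp add: abs_trace_def field_power_card flip: assms)
  finally show ?thesis .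
qed

lemma abs_trace_in_prime_field:
  fixes x :: "'a::{field,finite}"
  assumes "CARD('a) = CHAR('a) ^ n"
  shows "\<exists>k<CHAR('a). of_nat k = abs_trace CHAR('a) n x"
  by (rule power_CHAR_eq_self_imp_of_nat) (simp_all add: abs_trace_power_CHAR[OF assms])

text \<open>The trace is a polynomial function of degree \<open>p^(n-1) < q\<close>, so it cannot vanish on
  all of \<open>F_q\<close>.\<close>
lemma abs_trace_not_identically_zero:
  assumes "CARD('a::{field,finite}) = CHAR('a) ^ n"
  shows "\<exists>x::'a. abs_trace CHAR('a) n x \<noteq> 0"
proof (rule ccontr)
  assume all_zero: "\<not> ?thesis"
  let ?p = "CHAR('a)"
  have p: "?p > 1" using prime_gt_1_nat by simp
  have n: "n > 0" using card_UNIV_field_ge_2[where 'a='a] assms by (cases n) auto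
  define Q :: "'a poly" where "Q = (\<Sum>i<n. monom 1 (?p ^ i))"
  have "coeff Q 1 = (\<Sum>i<n. if i = 0 then 1 else 0)"
    unfolding Q_def coeff_sum by (intro sum.cong) (use p in \<open>auto simp: coeff_monom\<close>)
  hence "Q \<noteq> 0" using n by auto
  moreover have "degree Q \<le> ?p ^ (n - 1)"
    unfolding Q_def using p by (intro degree_sum_le) (auto intro: order.trans[OF degree_monom_le])
  moreover have "poly Q x = 0" for x
    using all_zero by (simp add: Q_def poly_sum poly_monom abs_trace_def)
  ultimately have "CARD('a) \<le> ?p ^ (n - 1)"
    using card_poly_roots_bound[of Q] by fastforce
  moreover have "?p ^ (n - 1) < ?p ^ n" using p n by (intro power_strict_increasing) auto
  ultimately show False using assms by simp
qed

definition add_char :: "nat \<Rightarrow> 'a::{field,finite} \<Rightarrow> complex" where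
  "add_char n x = e_p CHAR('a) (abs_trace CHAR('a) n x)"

lemma e_p_of_nat:
  assumes "CHAR('a::field) > 0"
  shows "e_p CHAR('a) (of_nat k :: 'a) = cis (2 * pi / CHAR('a)) ^ k"
proof -
  let ?p = "CHAR('a)"
  let ?\<omega> = "cis (2 * pi / ?p)"
  have "(THE k'. k' < ?p \<and> (of_nat k' :: 'a) = of_nat k) = k mod ?p"
    by (rule the_equality) (use assms in \<open>auto simp: of_nat_eq_iff_cong_CHAR cong_def\<close>)
  hence "e_p ?p (of_nat k :: 'a) = cis (real (k mod ?p) * (2 * pi / ?p))"
    by (simp add: e_p_def mult_ac)
  also have "\<dots> = ?\<omega> ^ (k mod ?p)"
    by (rule Complex.DeMoivre[symmetric])
  also have "\<dots> = (?\<omega> ^ ?p) ^ (k div ?p) * ?\<omega> ^ (k mod ?p)"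
    using assms by (simp add: Complex.DeMoivre)
  also have "\<dots> = ?\<omega> ^ k"
    by (simp flip: power_mult power_add)
  finally show ?thesis .
qed

lemma add_char_add:
  fixes x y :: "'a::{field,finite}"
  assumes "CARD('a) = CHAR('a) ^ n"
  shows "add_char n (x + y) = add_char n x * add_char n y"
proof -
  obtain a b where "of_nat a = abs_trace CHAR('a) n x" "of_nat b = abs_trace CHAR('a) n y"
    using abs_trace_in_prime_field[OF assms] by metis
  hence "add_char n (x + y) = e_p CHAR('a) (of_nat (a + b) :: 'a)"
    by (simp add: add_char_def abs_trace_add)
  also have "\<dots> = e_p CHAR('a) (of_nat a :: 'a) * e_p CHAR('a) (of_nat b :: 'a)"
    by (simp only: e_p_of_nat CHAR_pos_finite_field power_add)
  finally show ?thesis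
    by (simp add: add_char_def \<open>of_nat a = _\<close> \<open>of_nat b = _\<close>)
qed

lemma norm_add_char [simp]: "norm (add_char n x) = 1"
  by (simp add: add_char_def e_p_def)

lemma add_char_0 [simp]: "add_char n (0::'a::{field,finite}) = 1"
proof -
  have "abs_trace CHAR('a) n (0::'a) = of_nat 0"
    by (simp add: abs_trace_def zero_power)
  thus ?thesis unfolding add_char_def by (simp only: e_p_of_nat CHAR_pos_finite_field power_0)
qed

lemma add_char_nontrivial:
  assumes "CARD('a::{field,finite}) = CHAR('a) ^ n"
  shows "\<exists>x::'a. add_char n x \<noteq> 1"
proof -
  let ?p = "CHAR('a)"
  obtain x :: 'a where x: "abs_trace ?p n x \<noteq> 0"
    using abs_trace_not_identically_zero[OF assms] by blast
  obtain k where k: "k < ?p" "of_nat k = abs_trace ?p n x"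
    using abs_trace_in_prime_field[OF assms] by blast
  have "k > 0"
    using k x by (intro Nat.gr0I) auto
  have "add_char n x \<noteq> 1"
  proof
    assume "add_char n x = 1"
    hence "cis (2 * pi / ?p) ^ k = 1"
      by (simp add: add_char_def e_p_of_nat flip: k(2))
    hence "cis (real k * (2 * pi / ?p)) = 1"
      unfolding Complex.DeMoivre .
    then obtain m :: int where "real k * (2 * pi / ?p) = of_int m * (2 * pi)"
      by (auto simp: cis_eq_1_iff)
    hence "real k / ?p = of_int m"
      by (simp add: field_simps)
    moreover have "0 < real k / ?p" "real k / ?p < 1"
      using k \<open>k > 0\<close> by auto
    ultimately show False by simp
  qed
  thus ?thesis by blast
qed

lemma sum_add_char:
  assumes "CARD('a::{field,finite}) = CHAR('a) ^ n"
  shows "(\<Sum>x::'a\<in>UNIV. add_char n x) = 0"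
proof -
  obtain y :: 'a where y: "add_char n y \<noteq> 1" using add_char_nontrivial[OF assms] by blast
  have "(\<Sum>x::'a\<in>UNIV. add_char n x) = (\<Sum>x\<in>UNIV. add_char n (y + x))"
    by (rule sum.reindex_bij_witness[where i="\<lambda>x. y + x" and j="\<lambda>x. x - y"]) auto
  also have "\<dots> = add_char n y * (\<Sum>x::'a\<in>UNIV. add_char n x)"
    by (simp add: add_char_add[OF assms] sum_distrib_left)
  finally show ?thesis using y by (metis mult_cancel_right1)
qed

lemma sum_add_char_mult:
  fixes x :: "'a::{field,finite}"
  assumes "CARD('a) = CHAR('a) ^ n"
  shows "(\<Sum>c\<in>UNIV. add_char n (c * x)) = (if x = 0 then of_nat CARD('a) else 0)"
proof (cases "x = 0")
  case False
  have "(\<Sum>c\<in>UNIV. add_char n (c * x)) = (\<Sum>c::'a\<in>UNIV. add_char n c)"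
    by (rule sum.reindex_bij_witness[where i="\<lambda>c. c / x" and j="\<lambda>c. c * x"]) (use False in auto)
  thus ?thesis using False sum_add_char[OF assms] by simp
qed simp

lemma cnj_add_char:
  fixes x :: "'a::{field,finite}"
  assumes "CARD('a) = CHAR('a) ^ n"
  shows "cnj (add_char n x) = add_char n (- x)"
proof -
  have "add_char n x * add_char n (- x) = 1"
    by (simp flip: add_char_add[OF assms])
  moreover have "add_char n x * cnj (add_char n x) = 1"
    by (simp add: complex_norm_square[symmetric])
  ultimately show ?thesis
    by (metis mult_cancel_left norm_add_char norm_zero zero_neq_one)
qed

lemma norm_sum_add_char_square:
  fixes A :: "'a::{field,finite} set"
  assumes "CARD('a) = CHAR('a) ^ n"
  shows "of_real (norm (\<Sum>a\<in>A. add_char n (c * a)) ^ 2) =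
    (\<Sum>a\<in>A. \<Sum>b\<in>A. add_char n (c * (a - b)))"
proof -
  have "of_real (norm (\<Sum>a\<in>A. add_char n (c * a)) ^ 2) =
      (\<Sum>a\<in>A. add_char n (c * a)) * cnj (\<Sum>b\<in>A. add_char n (c * b))"
    by (rule complex_norm_square)
  also have "\<dots> = (\<Sum>a\<in>A. \<Sum>b\<in>A. add_char n (c * a) * add_char n (- (c * b)))"
    by (simp add: sum_distrib_left sum_distrib_right cnj_add_char[OF assms]) (rule sum.swap)
  also have "\<dots> = (\<Sum>a\<in>A. \<Sum>b\<in>A. add_char n (c * (a - b)))"
    by (simp add: algebra_simps flip: add_char_add[OF assms])
  finally show ?thesis .
qed

lemma sum_sum_add_char_diff:
  fixes A :: "'a::{field,finite} set"
  assumes "CARD('a) = CHAR('a) ^ n"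
  shows "(\<Sum>c\<in>UNIV. \<Sum>a\<in>A. \<Sum>b\<in>A. add_char n (c * (a - b))) = of_nat (CARD('a) * card A)"
proof -
  have "(\<Sum>c\<in>UNIV. \<Sum>a\<in>A. \<Sum>b\<in>A. add_char n (c * (a - b))) =
      (\<Sum>a\<in>A. \<Sum>b\<in>A. \<Sum>c\<in>UNIV. add_char n (c * (a - b)))"
    by (subst sum.swap) (simp only: sum.swap[of _ UNIV])
  also have "\<dots> = (\<Sum>a\<in>A. \<Sum>b\<in>A. if a = b then of_nat CARD('a) else 0)"
    by (simp add: sum_add_char_mult[OF assms])
  finally show ?thesis by simp
qed

lemma weighted_sum_Re_eq_sum_imp_eq_1:
  fixes w :: "'i \<Rightarrow> real" and u :: "'i \<Rightarrow> complex"
  assumes "finite S" and w: "\<And>i. i \<in> S \<Longrightarrow> w i \<ge> 0" and u: "\<And>i. i \<in> S \<Longrightarrow> norm (u i) = 1"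
    and sum_eq: "(\<Sum>i\<in>S. w i * Re (u i)) = (\<Sum>i\<in>S. w i)"
    and i: "i \<in> S" "w i > 0"
  shows "u i = 1"
proof -
  have "(\<Sum>i\<in>S. w i * (1 - Re (u i))) = 0"
    using sum_eq by (simp add: right_diff_distrib sum_subtractf)
  moreover have "w i * (1 - Re (u i)) \<ge> 0" if "i \<in> S" for i
    using w[OF that] u[OF that] complex_Re_le_cmod[of "u i"] by simp
  ultimately have "w i * (1 - Re (u i)) = 0"
    using sum_nonneg_eq_0_iff[OF \<open>finite S\<close>, of "\<lambda>i. w i * (1 - Re (u i))"] i(1) by blast
  hence "Re (u i) = 1"
    using i(2) by simp
  thus ?thesis
    using u[OF i(1)] norm_eq_Re_iff[of "u i"] by (auto simp: complex_nonneg_Reals_iff complex_eq_iff)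
qed

text \<open>Equality case of the triangle inequality: rotating by \<open>v = cnj T / |T|\<close> makes the sum
  \<open>T\<close> real and positive, which forces \<open>v z i = 1\<close> wherever \<open>w i > 0\<close>.\<close>
lemma norm_weighted_sum_eq_imp_aligned:
  fixes w :: "'i \<Rightarrow> real" and z :: "'i \<Rightarrow> complex"
  assumes "finite S" and w: "\<And>i. i \<in> S \<Longrightarrow> w i \<ge> 0" and z: "\<And>i. i \<in> S \<Longrightarrow> norm (z i) = 1"
    and norm_eq: "norm (\<Sum>i\<in>S. of_real (w i) * z i) = (\<Sum>i\<in>S. w i)"
    and pos: "(\<Sum>i\<in>S. w i) > 0"
  shows "\<exists>i\<in>S. w i > 0 \<and> z i = (\<Sum>i\<in>S. of_real (w i) * z i) / of_real (\<Sum>i\<in>S. w i)"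
proof -
  define T where "T = (\<Sum>i\<in>S. of_real (w i) * z i)"
  define W where "W = (\<Sum>i\<in>S. w i)"
  define v where "v = cnj T / of_real W"
  have nT: "norm T = W" and W: "W > 0"
    using norm_eq pos by (simp_all add: T_def W_def)
  have "v * T = of_real (norm T ^ 2) / of_real W"
    unfolding v_def complex_norm_square by (simp add: mult.commute)
  also have "\<dots> = of_real W"
    using nT W by (simp add: power2_eq_square)
  finally have vT: "v * T = of_real W" .
  have "v * T = (\<Sum>i\<in>S. w i *\<^sub>R (v * z i))"
    by (simp add: T_def sum_distrib_left scaleR_conv_of_real mult.left_commute)
  hence "Re (v * T) = (\<Sum>i\<in>S. w i * Re (v * z i))"
    by (simp only: Re_sum scaleR_complex.sel(1))
  hence Re_sum: "(\<Sum>i\<in>S. w i * Re (v * z i)) = (\<Sum>i\<in>S. w i)"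
    using vT by (simp add: W_def)
  obtain i where i: "i \<in> S" "w i > 0"
    using pos sum_nonpos[of S w] by force
  have "v * z i = 1"
  proof (rule weighted_sum_Re_eq_sum_imp_eq_1[OF \<open>finite S\<close> w _ Re_sum i])
    show "norm (v * z j) = 1" if "j \<in> S" for j
      using nT W z[OF that] by (simp add: v_def norm_mult norm_divide)
  qed
  hence "of_real W * z i = T"
    using vT by (metis mult.assoc mult.commute mult_1_right)
  hence "z i = T / of_real W"
    using W by (simp add: field_simps)
  thus ?thesis using i unfolding T_def W_def by blast
qed

locale nontrivial_mult_char =
  fixes n :: nat and X :: "'a::{field,finite} \<Rightarrow> complex"
  assumes card_eq: "CARD('a) = CHAR('a) ^ n"
    and X_0 [simp]: "X 0 = 0"
    and X_mult: "X (a * b) = X a * X b"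
    and norm_X: "c \<noteq> 0 \<Longrightarrow> norm (X c) = 1"
    and X_nontrivial: "\<exists>g. g \<noteq> 0 \<and> X g \<noteq> 1"
begin

abbreviation G :: complex where
  "G \<equiv> gauss_sum CHAR('a) n X"

lemma gauss_sum_eq_sum_add_char: "G = (\<Sum>c\<in>UNIV. X c * add_char n c)"
  by (simp add: gauss_sum_def add_char_def)

lemma X_1 [simp]: "X 1 = 1"
  using X_mult[of 1 1] norm_X[of 1] by (metis mult_cancel_left1 mult_1 norm_zero one_neq_zero zero_neq_one)

lemma sum_X: "(\<Sum>c\<in>UNIV. X c) = 0"
proof -
  obtain g where g: "g \<noteq> 0" "X g \<noteq> 1" using X_nontrivial by blast
  have "(\<Sum>c\<in>UNIV. X c) = (\<Sum>c\<in>UNIV. X (g * c))"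
    by (rule sum.reindex_bij_witness[where i="\<lambda>c. g * c" and j="\<lambda>c. c / g"]) (use g in auto)
  also have "\<dots> = X g * (\<Sum>c\<in>UNIV. X c)"
    by (simp add: X_mult sum_distrib_left)
  finally show ?thesis using g(2) by (metis mult_cancel_right1)
qed

lemma twisted_gauss_sum: "(\<Sum>a\<in>UNIV. X a * add_char n (a * b)) = cnj (X b) * G"
proof (cases "b = 0")
  case True
  thus ?thesis using sum_X by simp
next
  case False
  have "X b * (\<Sum>a\<in>UNIV. X a * add_char n (a * b)) = (\<Sum>a\<in>UNIV. X (a * b) * add_char n (a * b))"
    by (simp add: sum_distrib_left X_mult mult_ac)
  also have "\<dots> = G"
    unfolding gauss_sum_eq_sum_add_char
    by (rule sum.reindex_bij_witness[where i="\<lambda>c. c / b" and j="\<lambda>a. a * b"]) (use False in auto)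
  finally have "cnj (X b) * X b * (\<Sum>a\<in>UNIV. X a * add_char n (a * b)) = cnj (X b) * G"
    by (simp add: mult.assoc)
  moreover have "cnj (X b) * X b = 1"
    using norm_X[OF False] by (simp add: complex_norm_square[symmetric] mult.commute)
  ultimately show ?thesis by simp
qed

lemma gauss_sum_mult_cnj: "G * cnj G = of_nat CARD('a)"
proof -
  have "G * cnj G = (\<Sum>b\<in>UNIV. add_char n (- b) * (cnj (X b) * G))"
    by (simp add: gauss_sum_eq_sum_add_char sum_distrib_left sum_distrib_right
        cnj_add_char[OF card_eq] mult_ac)
  also have "\<dots> = (\<Sum>b\<in>UNIV. \<Sum>a\<in>UNIV. X a * add_char n (b * (a - 1)))"
    by (simp add: twisted_gauss_sum[symmetric] sum_distrib_left mult_ac algebra_simps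
        flip: add_char_add[OF card_eq])
  also have "\<dots> = (\<Sum>a\<in>UNIV. X a * (\<Sum>b\<in>UNIV. add_char n (b * (a - 1))))"
    by (subst sum.swap) (simp add: sum_distrib_left)
  also have "\<dots> = of_nat CARD('a)"
    by (simp add: sum_add_char_mult[OF card_eq] if_distrib cong: if_cong)
  finally show ?thesis .
qed

lemma norm_gauss_sum: "norm G = sqrt CARD('a)"
proof -
  have "complex_of_real (norm G ^ 2) = of_real CARD('a)"
    using gauss_sum_mult_cnj by (simp only: complex_norm_square of_real_of_nat_eq)
  hence "norm G ^ 2 = CARD('a)"
    by (simp only: of_real_eq_iff)
  thus ?thesis by (simp add: real_sqrt_unique)
qed

lemma clique_twisted_sum:
  assumes clique: "\<And>a b. a \<in> A \<Longrightarrow> b \<in> A \<Longrightarrow> a \<noteq> b \<Longrightarrow> X (a - b) = 1"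
  shows "(\<Sum>c\<in>UNIV. X c * (\<Sum>a\<in>A. \<Sum>b\<in>A. add_char n (c * (a - b)))) =
    of_nat (card A * (card A - 1)) * G"
proof -
  have "(\<Sum>c\<in>UNIV. X c * (\<Sum>a\<in>A. \<Sum>b\<in>A. add_char n (c * (a - b)))) =
      (\<Sum>a\<in>A. \<Sum>b\<in>A. \<Sum>c\<in>UNIV. X c * add_char n (c * (a - b)))"
    by (simp add: sum_distrib_left) (subst sum.swap, simp only: sum.swap[of _ UNIV])
  also have "\<dots> = (\<Sum>a\<in>A. \<Sum>b\<in>A. if a = b then 0 else G)"
    by (intro sum.cong refl) (auto simp: twisted_gauss_sum clique)
  also have "\<dots> = (\<Sum>a\<in>A. of_nat (card A - 1) * G)"
    by (intro sum.cong refl) (simp add: sum.If_cases card_Diff_singleton flip: Diff_eq)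
  finally show ?thesis by simp
qed

lemma clique_imp_gauss_sum_div_is_char_value:
  assumes q: "CARD('a) = r ^ 2" and card_A: "card A = r"
    and clique: "\<And>a b. a \<in> A \<Longrightarrow> b \<in> A \<Longrightarrow> a \<noteq> b \<Longrightarrow> X (a - b) = 1"
  shows "\<exists>c. c \<noteq> 0 \<and> X c = G / of_nat r"
proof -
  define w where "w c = norm (\<Sum>a\<in>A. add_char n (c * a)) ^ 2" for c
  define S where "S = UNIV - {0::'a}"
  have w: "of_real (w c) = (\<Sum>a\<in>A. \<Sum>b\<in>A. add_char n (c * (a - b)))" for c
    unfolding w_def by (rule norm_sum_add_char_square[OF card_eq])
  have r: "real r > 1"
    using card_UNIV_field_ge_2[where 'a='a] q by (cases r rule: linorder_cases) (auto simp: power2_eq_square)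
  have "(of_real (\<Sum>c\<in>S. w c) :: complex) = (\<Sum>c\<in>UNIV. of_real (w c)) - of_real (w 0)"
    by (simp add: S_def sum_diff1)
  also have "\<dots> = of_real (real r ^ 2 * (real r - 1))"
    unfolding w sum_sum_add_char_diff[OF card_eq] using card_A q by (simp add: algebra_simps power2_eq_square)
  finally have W: "(\<Sum>c\<in>S. w c) = real r ^ 2 * (real r - 1)"
    by (simp only: of_real_eq_iff)
  have T: "(\<Sum>c\<in>S. of_real (w c) * X c) = of_real (real r * (real r - 1)) * G"
    using clique_twisted_sum[OF clique] card_A r
    by (simp add: S_def sum_diff1 w mult.commute of_nat_diff)
  have "norm G = real r"
    using norm_gauss_sum q by simp
  hence norm_eq: "norm (\<Sum>c\<in>S. of_real (w c) * X c) = (\<Sum>c\<in>S. w c)"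
    unfolding T W norm_mult norm_of_real using r by (simp add: power2_eq_square)
  have "\<exists>c\<in>S. w c > 0 \<and> X c = (\<Sum>c\<in>S. of_real (w c) * X c) / of_real (\<Sum>c\<in>S. w c)"
  proof (rule norm_weighted_sum_eq_imp_aligned[OF _ _ _ norm_eq])
    show "(\<Sum>c\<in>S. w c) > 0" unfolding W using r by simp
  qed (auto simp: S_def w_def norm_X)
  then obtain c where c: "c \<in> S"
    "X c = of_real (real r * (real r - 1)) * G / of_real (real r ^ 2 * (real r - 1))"
    unfolding T W by blast
  have "of_real (real r ^ 2 * (real r - 1)) = of_real (real r * (real r - 1)) * (of_nat r :: complex)"
    by (simp add: power2_eq_square mult_ac)
  hence "X c = G / of_nat r"
    using c(2) r by simp
  thus ?thesis using c(1) by (auto simp: S_def)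
qed

end

lemma mult_char_nonzero:
  assumes "mult_char chi" "x \<noteq> 0"
  shows "chi x \<noteq> 0"
  using assms unfolding mult_char_def by blast

lemma mult_char_mult:
  assumes "mult_char chi" "x \<noteq> 0" "y \<noteq> 0"
  shows "chi (x * y) = chi x * chi y"
  using assms unfolding mult_char_def by blast

lemma mult_char_1:
  assumes "mult_char chi"
  shows "chi 1 = 1"
proof -
  have "chi 1 * chi 1 = chi 1 * 1"
    using mult_char_mult[OF assms, of 1 1] by simp
  thus ?thesis
    using mult_char_nonzero[OF assms, of 1] by (metis mult_left_cancel one_neq_zero)
qed

lemma mult_char_power:
  assumes "mult_char chi" "x \<noteq> 0"
  shows "chi (x ^ k) = chi x ^ k"
  by (induction k) (simp_all add: mult_char_1[OF assms(1)] mult_char_mult[OF assms(1)] assms(2))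

lemma mult_char_power_card_minus_one:
  fixes chi :: "'a::{field,finite} \<Rightarrow> complex"
  assumes "mult_char chi" "x \<noteq> 0"
  shows "chi x ^ (CARD('a) - 1) = 1"
proof -
  have "chi x ^ (CARD('a) - 1) = chi (x ^ (CARD('a) - 1))"
    by (rule mult_char_power[OF assms, symmetric])
  also have "\<dots> = chi 1"
    by (simp only: field_power_card_minus_one[OF assms(2)])
  finally show ?thesis by (simp add: mult_char_1[OF assms(1)])
qed

lemma mult_char_power_order:
  fixes chi :: "'a::{field,finite} \<Rightarrow> complex"
  assumes "mult_char chi" "x \<noteq> 0"
  shows "chi x ^ char_order chi = 1"
proof -
  have "CARD('a) - 1 > 0 \<and> (\<forall>y::'a. y \<noteq> 0 \<longrightarrow> chi y ^ (CARD('a) - 1) = 1)"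
    using card_UNIV_field_ge_2[where 'a='a] mult_char_power_card_minus_one[OF assms(1)] by simp
  hence "char_order chi > 0 \<and> (\<forall>y::'a. y \<noteq> 0 \<longrightarrow> chi y ^ char_order chi = 1)"
    unfolding char_order_def by (rule LeastI)
  thus ?thesis using assms(2) by simp
qed

lemma norm_mult_char:
  fixes chi :: "'a::{field,finite} \<Rightarrow> complex"
  assumes "mult_char chi" "x \<noteq> 0"
  shows "norm (chi x) = 1"
proof (rule power_eq_imp_eq_base)
  show "norm (chi x) ^ (CARD('a) - 1) = 1 ^ (CARD('a) - 1)"
    using mult_char_power_card_minus_one[OF assms] by (simp flip: norm_power)
  show "CARD('a) - 1 > 0"
    using card_UNIV_field_ge_2[where 'a='a] by simp
qed simp_all

lemma char_pow_trivial:
  assumes "\<forall>x. x \<noteq> 0 \<longrightarrow> chi x ^ j = 1"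
  shows "char_pow chi j = (\<lambda>_. 1)"
  using assms by (auto simp: char_pow_def)

lemma char_pow_power_order:
  fixes chi :: "'a::{field,finite} \<Rightarrow> complex"
  assumes "mult_char chi" "x \<noteq> 0"
  shows "char_pow chi j x ^ char_order chi = 1"
proof -
  have "char_pow chi j x ^ char_order chi = (chi x ^ char_order chi) ^ j"
    using assms(2) by (simp add: char_pow_def mult.commute flip: power_mult)
  thus ?thesis using mult_char_power_order[OF assms] by simp
qed

lemma nontrivial_mult_char_char_pow:
  fixes chi :: "'a::{field,finite} \<Rightarrow> complex"
  assumes "CARD('a) = CHAR('a) ^ n" "mult_char chi" "\<not> (\<forall>x. x \<noteq> 0 \<longrightarrow> chi x ^ j = 1)"
  shows "nontrivial_mult_char n (char_pow chi j)"
proof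
  have chi_pow: "char_pow chi j c = (if c = 0 then 0 else chi c ^ j)" for c
    using assms(3) by (auto simp: char_pow_def)
  show "CARD('a) = CHAR('a) ^ n" by (fact assms(1))
  show "char_pow chi j 0 = 0" by (simp add: chi_pow)
  show "char_pow chi j (a * b) = char_pow chi j a * char_pow chi j b" for a b
    by (simp add: chi_pow mult_char_mult[OF assms(2)] power_mult_distrib)
  show "norm (char_pow chi j c) = 1" if "c \<noteq> 0" for c
    using norm_mult_char[OF assms(2) that] that by (simp add: chi_pow norm_power)
  show "\<exists>g. g \<noteq> 0 \<and> char_pow chi j g \<noteq> 1"
    using assms(3) by (auto simp: chi_pow)
qed

lemma gauss_sum_trivial_char:
  assumes "CARD('a::{field,finite}) = CHAR('a) ^ n"
  shows "gauss_sum CHAR('a) n (\<lambda>_::'a. 1) = 0"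
  using sum_add_char[OF assms] by (simp add: gauss_sum_def add_char_def)

lemma ex_gp_clique_card_eq_clique_number:
  "\<exists>A::'a::{field,finite} set. gp_clique d A \<and> card A = gp_clique_number d TYPE('a)"
proof -
  let ?C = "{card (A::'a set) | A. gp_clique d A}"
  have "?C \<subseteq> card ` (UNIV :: 'a set set)"
    by blast
  hence "finite ?C"
    by (rule finite_subset) simp
  moreover have "gp_clique d ({}::'a set)"
    by (simp add: gp_clique_def)
  hence "?C \<noteq> {}"
    by blast
  ultimately have "Max ?C \<in> ?C"
    using Max_in by blast
  then obtain A :: "'a set" where "gp_clique d A" "Max ?C = card A"
    by blast
  thus ?thesis
    unfolding gp_clique_number_def by auto
qed

lemma char_pow_gp_clique_diff:
  fixes chi :: "'a::{field,finite} \<Rightarrow> complex"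
  assumes "mult_char chi" "char_order chi = d" "gp_clique d A" "a \<in> A" "b \<in> A" "a \<noteq> b"
  shows "char_pow chi j (a - b) = 1"
proof -
  obtain z where z: "z \<noteq> 0" "a - b = z ^ d"
    using assms(3-6) unfolding gp_clique_def gp_adj_def by meson
  hence "char_pow chi j (a - b) = (chi z ^ d) ^ j"
    using assms(6) by (simp add: char_pow_def mult_char_power[OF assms(1)])
  thus ?thesis
    using mult_char_power_order[OF assms(1) z(1)] assms(2) by simp
qed

lemma pure_if_power_real:
  assumes "d > 0" "z ^ d \<in> \<real>"
  shows "pure z"
  unfolding pure_def using assms by (intro exI[of _ "int d"]) simp

theorem proposition3p6:
  fixes chi :: "'a::{field,finite} \<Rightarrow> complex" and p s d :: nat
  assumes "d > 1"
    and "prime p" and "odd p" and "CHAR('a) = p"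
    and "CARD('a) = p ^ (2 * s)"
    and "CARD('a) mod (2 * d) = 1"
    and "mult_char chi" and "char_order chi = d"
    and "real (gp_clique_number d TYPE('a)) = sqrt (real CARD('a))"
  shows "\<forall>j::nat. j > 0 \<longrightarrow> pure (gauss_sum p (2 * s) (char_pow chi j))"
proof (intro allI impI)
  fix j :: nat
  have card: "CARD('a) = CHAR('a) ^ (2 * s)" and q: "CARD('a) = (p ^ s) ^ 2"
    using assms(4,5) by (simp_all add: power_mult mult.commute)
  show "pure (gauss_sum p (2 * s) (char_pow chi j))"
  proof (cases "\<forall>x. x \<noteq> 0 \<longrightarrow> chi x ^ j = 1")
    case True
    thus ?thesis
      using gauss_sum_trivial_char[OF card] assms(4) by (simp add: char_pow_trivial pure_if_power_real[of 1])
  next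
    case False
    interpret nontrivial_mult_char "2 * s" "char_pow chi j"
      by (rule nontrivial_mult_char_char_pow[OF card assms(7) False])
    have "gp_clique_number d TYPE('a) = p ^ s"
      using assms(9) q by simp
    then obtain A :: "'a set" where A: "gp_clique d A" "card A = p ^ s"
      using ex_gp_clique_card_eq_clique_number[where 'a='a, of d] by metis
    then obtain c where c: "c \<noteq> 0" "char_pow chi j c = G / of_nat (p ^ s)"
      using clique_imp_gauss_sum_div_is_char_value[OF q] char_pow_gp_clique_diff[OF assms(7,8)]
      by blast
    have "(G / of_nat (p ^ s)) ^ d = 1"
      using char_pow_power_order[OF assms(7) c(1), of j] unfolding c(2) assms(8) .
    hence "G ^ d = of_nat (p ^ s) ^ d"
      using assms(2) by (simp add: power_divide prime_gt_0_nat)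
    thus ?thesis
      using pure_if_power_real[of d G] assms(1,4) by simp
  qed
qed

end
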